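(* Let $\mathbf b,\mathbf b'\in\mathrm{Seq}(B,d)$. Then $\mathbf b^*:=b_1^*\cdots b_d^*\in\mathrm{Seq}(B^*,d)$, and $(y_{\mathbf b'},y_{\mathbf b^*})_d=\pm\, d!\,\delta_{\mathbf b\sim\mathbf b'}$, where $\delta_{\mathbf b\sim\mathbf b'}$ is $1$ if $\mathbf b\sim\mathbf b'$ and $0$ otherwise.
   Context: Let $R$ be a principal ideal domain of characteristic $0$. Supermodules are $\mathbb Z/2$-graded, $|v|$ is the parity of a homogeneous $v$. A calibrated $R$-supermodule is a free $R$-supermodule $V=V_{\bar0}\oplus V_{\bar1}$ of finite rank with a decomposition $V_{\bar0}=V_{\mathfrak a}\oplus V_{\mathfrak c}$ into free $R$-submodules; given bases $B_{\mathfrak a},B_{\mathfrak c},B_{\bar1}$ of these three pieces and a total order on $B=B_{\mathfrak a}\sqcup B_{\mathfrak c}\sqcup B_{\bar1}$, define: $\mathfrak S_d$ acts on $V^{\otimes d}$ on the right by $(v_1\otimes\cdots\otimes v_d)^\sigma=(-1)^{\langle\sigma;\mathbf v\rangle}v_{\sigma1}\otimes\cdots\otimes v_{\sigma d}$, $\langle\sigma;\mathbf v\rangle$ = number of $k<l$ with $\sigma^{-1}k>\sigma^{-1}l$ and $v_k,v_l$ odd; $\mathfrak S_d$ acts on $B^d$ by place permutations and $\sim$ means same orbit; for $\mathbf b\in B^d$, $\langle\mathbf b\rangle$ = number of $k<l$ with $b_k,b_l\in B_{\bar1}$, $b_k>b_l$; $[\mathbf b]^!_{\mathfrak c}=\prod_{b\in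 B_{\mathfrak c}}\#\{k:b_k=b\}!$; $\mathrm{Seq}(B,d)$ = tuples in $B^d$ in which only elements of $B_{\mathfrak a}\sqcup B_{\mathfrak c}$ may repeat; $x_{\mathbf b}=\sum(-1)^{\langle\mathbf b\rangle+\langle\mathbf b'\rangle}b'_1\otimes\cdots\otimes b'_d$ over distinct $\mathbf b'\sim\mathbf b$, and $y_{\mathbf b}=[\mathbf b]^!_{\mathfrak c}x_{\mathbf b}$. Setting: $V$ is a calibrated $R$-supermodule equipped with an even, non-degenerate, $R$-valued bilinear form $(\cdot,\cdot)$ which is supersymmetric or superantisymmetric, such that $(V_{\mathfrak a},V_{\mathfrak a})=0$ and the restriction of $(\cdot,\cdot)$ to $V_{\mathfrak a}\times V_{\mathfrak c}$ is a perfect pairing. Choose bases $B_{\mathfrak a}=\{a_1,\dots,a_r\}$, $B_{\mathfrak c}=\{c_1,\dots,c_r\}$ with $(a_i,c_j)=\delta_{i,j}$, a basis $B_{\bar1}$ of $V_{\bar1}$, and $B=B_{\mathfrak a}\sqcup B_{\mathfrak c}\sqcup B_{\bar1}$. Let $B^*=\{b^*:b\in B\}$ be the dual basis, $(b',b^* )=\delta_{b,b'}$ for $b,b'\in B$. Then $c_i^*=\pm a_i$, and $V$ is also calibrated with the same $V_{\mathfrak a}$ and complement $V'_{\mathfrak c}=\mathrm{span}_R\{a_1^*,\dots,a_r^*\}$, with basis $B^*$ split as $B^*_{\mathfrak a}=\{c_i^*\}$, $B^*_{\mathfrak c}=\{a_i^*\}$, $B^*_{\bar1}=\{b^*:b\in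 B_{\bar1}\}$ (and some fixed total order on $B^*$); $\mathrm{Seq}(B^*,d)$ and $y_{\mathbf b^*}$ are formed with respect to this data. The form extends to $V^{\otimes d}$ by $(v_1\otimes\cdots\otimes v_d,w_1\otimes\cdots\otimes w_d)_d=(-1)^{\langle\mathbf v,\mathbf w\rangle}(v_1,w_1)\cdots(v_d,w_d)$, where $\langle\mathbf v,\mathbf w\rangle$ is the number of pairs $k>l$ with $v_k$ and $w_l$ odd. *)

theory Defs
  imports Main "HOL-Combinatorics.Permutations"
begin

definition is_ideal :: "'r::comm_ring_1 set \<Rightarrow> bool" where
  "is_ideal I \<longleftrightarrow> 0 \<in> I \<and> (\<forall>x\<in>I. \<forall>y\<in>I. x + y \<in> I) \<and> (\<forall>r. \<forall>x\<in>I. r * x \<in> I)"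

definition pid_type :: "'r::idom itself \<Rightarrow> bool" where
  "pid_type _ \<longleftrightarrow> (\<forall>I::'r set. is_ideal I \<longrightarrow> (\<exists>g. I = {r * g | r. True}))"

datatype kind = KA | KC | KO   (* B_a, B_c (both even), B_1 (odd) *)

(* calibration of the dual basis: b^* is in B^*_a iff b in B_c, in B^*_c iff b in B_a *)
fun swapk :: "kind \<Rightarrow> kind" where
  "swapk KA = KC" | "swapk KC = KA" | "swapk KO = KO"

text \<open>V is the free module with basis indexed by the finite type 'b; a vector is its coordinate
  function 'b => 'r.  A tensor in V^{\<otimes>d} is a coordinate function on B^d, i.e. on lists of
  length d.\<close>

definition bil :: "('b::finite \<Rightarrow> 'b \<Rightarrow> 'r::comm_ring_1) \<Rightarrow> ('b \<Rightarrow> 'r) \<Rightarrow> ('b \<Rightarrow> 'r) \<Rightarrow> 'r" where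
  "bil G v w = (\<Sum>x\<in>UNIV. \<Sum>y\<in>UNIV. v x * w y * G x y)"

definition basis_vec :: "'b \<Rightarrow> ('b \<Rightarrow> 'r::comm_ring_1)" where
  "basis_vec b = (\<lambda>c. if c = b then 1 else 0)"

definition tensor :: "('b \<Rightarrow> 'r::comm_ring_1) list \<Rightarrow> ('b list \<Rightarrow> 'r)" where
  "tensor vs = (\<lambda>e. if length e = length vs then (\<Prod>k<length vs. (vs ! k) (e ! k)) else 0)"

definition orbit_eq :: "'b list \<Rightarrow> 'b list \<Rightarrow> bool" where
  "orbit_eq xs ys \<longleftrightarrow> length ys = length xs \<and>
     (\<exists>\<sigma>. \<sigma> permutes {..<length xs} \<and> ys = map (\<lambda>i. xs ! \<sigma> i) [0..<length xs])"

definition odd_inv :: "('b \<Rightarrow> kind) \<Rightarrow> ('b \<Rightarrow> 'b \<Rightarrow> bool) \<Rightarrow> 'b list \<Rightarrow> nat" where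
  "odd_inv K lt xs = card {(k, l). k < l \<and> l < length xs \<and> K (xs ! k) = KO \<and> K (xs ! l) = KO
                                   \<and> lt (xs ! l) (xs ! k)}"

definition cfact :: "('b \<Rightarrow> kind) \<Rightarrow> 'b list \<Rightarrow> nat" where
  "cfact K xs = (\<Prod>b\<in>{b\<in>set xs. K b = KC}. fact (count_list xs b))"

definition Seq :: "'v set \<Rightarrow> ('v \<Rightarrow> kind) \<Rightarrow> nat \<Rightarrow> 'v list set" where
  "Seq S K d = {xs. length xs = d \<and> set xs \<subseteq> S \<and>
      (\<forall>i<d. \<forall>j<d. i \<noteq> j \<longrightarrow> xs ! i = xs ! j \<longrightarrow> K (xs ! i) \<noteq> KO)}"

text \<open>Generic version for a calibrated basis whose elements are vec b (b ranging over the index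
  type 'b), with kinds K and strict total order lt (both given on indices).  Since vec is
  injective, distinct tuples of basis elements correspond to distinct index tuples.\<close>

definition x_gen :: "('b::finite \<Rightarrow> ('b \<Rightarrow> 'r::comm_ring_1)) \<Rightarrow> ('b \<Rightarrow> kind) \<Rightarrow> ('b \<Rightarrow> 'b \<Rightarrow> bool)
                      \<Rightarrow> 'b list \<Rightarrow> ('b list \<Rightarrow> 'r)" where
  "x_gen vec K lt bs = (\<lambda>f. \<Sum>e\<in>{e. orbit_eq bs e}.
       (-1) ^ (odd_inv K lt bs + odd_inv K lt e) * tensor (map vec e) f)"

definition y_gen :: "('b::finite \<Rightarrow> ('b \<Rightarrow> 'r::comm_ring_1)) \<Rightarrow> ('b \<Rightarrow> kind) \<Rightarrow> ('b \<Rightarrow> 'b \<Rightarrow> bool)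
                      \<Rightarrow> 'b list \<Rightarrow> ('b list \<Rightarrow> 'r)" where
  "y_gen vec K lt bs = (\<lambda>f. of_nat (cfact K bs) * x_gen vec K lt bs f)"

definition pair_sgn :: "('b \<Rightarrow> kind) \<Rightarrow> 'b list \<Rightarrow> 'b list \<Rightarrow> nat" where
  "pair_sgn K e f = card {(k, l). l < k \<and> k < length e \<and> K (e ! k) = KO \<and> K (f ! l) = KO}"

(* bilinear extension of (v_1..v_d, w_1..w_d)_d from basis tensors (which are homogeneous) *)
definition form_d :: "('b::finite \<Rightarrow> 'b \<Rightarrow> 'r::comm_ring_1) \<Rightarrow> ('b \<Rightarrow> kind) \<Rightarrow> nat
                      \<Rightarrow> ('b list \<Rightarrow> 'r) \<Rightarrow> ('b list \<Rightarrow> 'r) \<Rightarrow> 'r" where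
  "form_d G K d X Y = (\<Sum>e\<in>{e. length e = d}. \<Sum>f\<in>{f. length f = d}.
       X e * Y f * (-1) ^ pair_sgn K e f * (\<Prod>k<d. G (e ! k) (f ! k)))"

end

theory Submission
  imports Defs "HOL-Combinatorics.Multiset_Permutations"
begin

text \<open>
  Expand y_b' in basis tensors and y_b* in dual basis tensors. Every dual basis vector b* is
  homogeneous of the parity of b: its component of the other parity is orthogonal to all basis
  vectors, hence zero by supersymmetry and nondegeneracy. So the form pairs a basis tensor e with a
  dual basis tensor g* to (-1)^<e,g> if e = g and to 0 otherwise, and the pairing in question is
  [b']^!_c [b*]^!_c times a signed sum over the common orbit of b and b', which is empty unless
  b ~ b'. On the orbit all signs agree: modulo 2 the two inversion counts <e> (for the orders of B
  and of B*) add up to the number of unordered pairs of odd entries on which the orders disagree,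
  and <e,e> is the number of all unordered pairs of odd entries; as odd entries do not repeat,
  both only depend on the set of entries. Finally [b]^!_c [b*]^!_c times the size of the orbit is d!.
\<close>

lemma orbit_eq_iff_mset: "orbit_eq xs ys \<longleftrightarrow> mset ys = mset xs"
proof
  assume "orbit_eq xs ys"
  then obtain \<sigma> where "\<sigma> permutes {..<length xs}" "ys = permute_list \<sigma> xs"
    unfolding orbit_eq_def permute_list_def by auto
  then show "mset ys = mset xs" by simp
next
  assume eq: "mset ys = mset xs"
  then obtain \<sigma> where "\<sigma> permutes {..<length xs}" "permute_list \<sigma> xs = ys"
    by (metis mset_eq_permutation)
  moreover have "length ys = length xs" using eq by (metis size_mset)
  ultimately show "orbit_eq xs ys" unfolding orbit_eq_def permute_list_def by auto
qed

lemma orbit_eq_set: "{e. orbit_eq xs e} = permutations_of_multiset (mset xs)"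
  by (simp add: permutations_of_multiset_def orbit_eq_iff_mset)

lemma finite_orbit: "finite {e. orbit_eq xs e}"
  by (simp add: orbit_eq_set)

definition odd_distinct :: "('b \<Rightarrow> kind) \<Rightarrow> 'b list \<Rightarrow> bool" where
  "odd_distinct K xs \<longleftrightarrow>
     (\<forall>i<length xs. \<forall>j<length xs. i \<noteq> j \<longrightarrow> xs ! i = xs ! j \<longrightarrow> K (xs ! i) \<noteq> KO)"

lemma Seq_iff: "xs \<in> Seq S K d \<longleftrightarrow> length xs = d \<and> set xs \<subseteq> S \<and> odd_distinct K xs"
  by (auto simp: Seq_def odd_distinct_def)

lemma odd_distinct_iff_count:
  "odd_distinct K xs \<longleftrightarrow> (\<forall>x. K x = KO \<longrightarrow> count (mset xs) x \<le> 1)"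
proof -
  have "count (mset xs) x = card {i. i < length xs \<and> xs ! i = x}" for x
    by (simp add: count_mset count_list_eq_length_filter length_filter_conv_card eq_commute)
  then show ?thesis
    unfolding odd_distinct_def by (auto simp: card_le_Suc0_iff_eq)
qed

lemma odd_distinct_mset_eq: "mset xs = mset ys \<Longrightarrow> odd_distinct K xs \<longleftrightarrow> odd_distinct K ys"
  by (simp add: odd_distinct_iff_count)

lemma count_list_odd_distinct:
  assumes "odd_distinct K xs" "x \<in> set xs" "K x = KO"
  shows "count_list xs x = 1"
  using assms by (simp add: odd_distinct_iff_count le_Suc_eq flip: count_mset)

lemma map_in_Seq:
  assumes "inj f" "xs \<in> Seq S K d" "\<And>x. K' (f x) = KO \<longleftrightarrow> K x = KO"
  shows "map f xs \<in> Seq (f ` S) K' d"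
  using assms unfolding Seq_def by (auto simp: inj_eq)

lemma tensor_map_basis_vec:
  "tensor (map basis_vec e') e = (if e = e' then 1 else (0::'r::comm_ring_1))"
proof (cases "length e = length e' \<and> e \<noteq> e'")
  case True
  then obtain k where "k < length e'" "e ! k \<noteq> e' ! k"
    by (auto simp: list_eq_iff_nth_eq)
  then show ?thesis
    using True unfolding tensor_def by (auto intro!: prod_zero simp: basis_vec_def)
qed (auto simp: tensor_def basis_vec_def)

lemma x_gen_basis_vec:
  "x_gen basis_vec K lt bs e =
     (if orbit_eq bs e then (-1) ^ (odd_inv K lt bs + odd_inv K lt e) else (0::'r::comm_ring_1))"
  unfolding x_gen_def tensor_map_basis_vec using finite_orbit[of bs]
  by (simp add: if_distrib cong: if_cong)

lemma sum_lists_length_prod: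
  fixes h :: "nat \<Rightarrow> 'b::finite \<Rightarrow> 'r::comm_semiring_1"
  shows "(\<Sum>f\<in>{f. length f = n}. \<Prod>k<n. h k (f ! k)) = (\<Prod>k<n. \<Sum>y\<in>UNIV. h k y)"
proof (induction n arbitrary: h)
  case (Suc n)
  have lists_Suc: "{f. length f = Suc n} = (\<lambda>(y, f). y # f) ` (UNIV \<times> {f. length f = n})"
    by (auto simp: length_Suc_conv image_iff)
  have "inj_on (\<lambda>(y, f). y # f) (UNIV \<times> {f::'b list. length f = n})"
    by (auto simp: inj_on_def)
  then have "(\<Sum>f\<in>{f. length f = Suc n}. \<Prod>k<Suc n. h k (f ! k))
      = (\<Sum>(y, f)\<in>UNIV \<times> {f. length f = n}. h 0 y * (\<Prod>k<n. h (Suc k) (f ! k)))"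
    unfolding lists_Suc
    by (subst sum.reindex) (simp_all add: prod.lessThan_Suc_shift case_prod_beta del: prod.lessThan_Suc)
  also have "\<dots> = (\<Sum>y\<in>UNIV. h 0 y) * (\<Prod>k<n. \<Sum>y\<in>UNIV. h (Suc k) y)"
    by (simp add: sum_product sum.cartesian_product flip: Suc.IH)
  finally show ?case
    by (simp only: prod.lessThan_Suc_shift)
qed simp

lemma bil_basis_vec: "bil G (basis_vec b) v = (\<Sum>y\<in>UNIV. v y * G b y)"
proof -
  have "(\<Sum>y\<in>UNIV. basis_vec b x * v y * G x y) = (if x = b then (\<Sum>y\<in>UNIV. v y * G b y) else 0)" for x
    by (simp add: basis_vec_def)
  then show ?thesis by (simp add: bil_def)
qed

lemma inj_dual:
  assumes "\<And>b b'. bil G (basis_vec b') (dual b) = (if b = b' then 1 else (0::'r::comm_ring_1))"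
  shows "inj dual"
proof (rule injI)
  fix a b assume "dual a = dual b"
  then show "a = b" by (metis assms zero_neq_one)
qed

lemma nondeg_right:
  fixes G :: "'b::finite \<Rightarrow> 'b \<Rightarrow> 'r::comm_ring_1"
  assumes even: "\<And>x y. G x y \<noteq> 0 \<Longrightarrow> (K x = KO \<longleftrightarrow> K y = KO)"
    and supsym: "\<And>x y. G x y = \<epsilon> * (-1) ^ (if K x = KO \<and> K y = KO then 1 else 0) * G y x"
    and nondeg: "\<And>v. (\<forall>w. bil G v w = 0) \<Longrightarrow> v = (\<lambda>_. 0)"
    and orth: "\<And>b. bil G (basis_vec b) v = 0"
  shows "v = (\<lambda>_. 0)"
proof (rule nondeg, intro allI)
  fix w
  have left_orth: "(\<Sum>x\<in>UNIV. v x * G x b) = 0" for b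
  proof -
    let ?c = "\<epsilon> * (-1) ^ (if K b = KO then 1 else 0)"
    have "v x * G x b = ?c * (v x * G b x)" for x
      using supsym[of x b] even[of b x] by (cases "G b x = 0") (auto simp: algebra_simps)
    then have "(\<Sum>x\<in>UNIV. v x * G x b) = ?c * bil G (basis_vec b) v"
      by (simp add: bil_basis_vec sum_distrib_left)
    then show ?thesis by (simp add: orth)
  qed
  have "bil G v w = (\<Sum>y\<in>UNIV. w y * (\<Sum>x\<in>UNIV. v x * G x y))"
    unfolding bil_def by (subst sum.swap) (simp add: sum_distrib_left algebra_simps)
  then show "bil G v w = 0" by (simp add: left_orth)
qed

definition parity_homogeneous :: "('b \<Rightarrow> kind) \<Rightarrow> ('b \<Rightarrow> 'b \<Rightarrow> 'r::zero) \<Rightarrow> bool" where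
  "parity_homogeneous K v \<longleftrightarrow> (\<forall>b y. v b y \<noteq> 0 \<longrightarrow> (K y = KO \<longleftrightarrow> K b = KO))"

lemma parity_homogeneousD: "parity_homogeneous K v \<Longrightarrow> v b y \<noteq> 0 \<Longrightarrow> K y = KO \<longleftrightarrow> K b = KO"
  by (simp add: parity_homogeneous_def)

lemma dual_homogeneous:
  fixes G :: "'b::finite \<Rightarrow> 'b \<Rightarrow> 'r::comm_ring_1"
  assumes even: "\<And>x y. G x y \<noteq> 0 \<Longrightarrow> (K x = KO \<longleftrightarrow> K y = KO)"
    and supsym: "\<And>x y. G x y = \<epsilon> * (-1) ^ (if K x = KO \<and> K y = KO then 1 else 0) * G y x"
    and nondeg: "\<And>v. (\<forall>w. bil G v w = 0) \<Longrightarrow> v = (\<lambda>_. 0)"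
    and dual: "\<And>b b'. bil G (basis_vec b') (dual b) = (if b = b' then 1 else 0)"
  shows "parity_homogeneous K dual"
  unfolding parity_homogeneous_def
proof (intro allI impI)
  fix b y assume "dual b y \<noteq> 0"
  show "K y = KO \<longleftrightarrow> K b = KO"
  proof (rule ccontr)
    assume parity_differs: "\<not> (K y = KO \<longleftrightarrow> K b = KO)"
    define v where "v = (\<lambda>z. if K z = KO \<longleftrightarrow> K b = KO then 0 else dual b z)"
    have "bil G (basis_vec b') v = 0" for b'
    proof (cases "K b' = KO \<longleftrightarrow> K b = KO")
      case True
      then have "v z * G b' z = 0" for z
        using even[of b' z] unfolding v_def by (cases "G b' z = 0") auto
      then show ?thesis by (simp add: bil_basis_vec)
    next
      case False
      then have "v z * G b' z = dual b z * G b' z" for z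
        using even[of b' z] unfolding v_def by (cases "G b' z = 0") auto
      then have "bil G (basis_vec b') v = bil G (basis_vec b') (dual b)"
        by (simp add: bil_basis_vec)
      then show ?thesis using False dual[of b' b] by auto
    qed
    with even supsym nondeg have "v = (\<lambda>_. 0)" by (rule nondeg_right)
    then show False using parity_differs \<open>dual b y \<noteq> 0\<close> unfolding v_def by meson
  qed
qed

lemma tensor_dual_pairing:
  fixes G :: "'b::finite \<Rightarrow> 'b \<Rightarrow> 'r::comm_ring_1"
  assumes hom: "parity_homogeneous K dual"
    and dual: "\<And>b b'. bil G (basis_vec b') (dual b) = (if b = b' then 1 else 0)"
    and len: "length e = d" "length g = d"
  shows "(\<Sum>f | length f = d. tensor (map dual g) f * (-1) ^ pair_sgn K e f * (\<Prod>k<d. G (e ! k) (f ! k)))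
       = (if e = g then (-1) ^ pair_sgn K g g else 0)"
proof -
  have summand: "tensor (map dual g) f * (-1) ^ pair_sgn K e f * (\<Prod>k<d. G (e ! k) (f ! k))
      = (-1) ^ pair_sgn K e g * (\<Prod>k<d. dual (g ! k) (f ! k) * G (e ! k) (f ! k))"
    if "length f = d" for f
  proof (cases "\<forall>k<d. dual (g ! k) (f ! k) \<noteq> 0")
    case True
    then have "\<forall>k<d. K (f ! k) = KO \<longleftrightarrow> K (g ! k) = KO"
      using parity_homogeneousD[OF hom] by blast
    then have "pair_sgn K e f = pair_sgn K e g"
      unfolding pair_sgn_def using len by (intro arg_cong[where f=card]) auto
    then show ?thesis using that len by (simp add: tensor_def prod.distrib algebra_simps)
  next
    case False
    then have "(\<Prod>k<d. dual (g ! k) (f ! k)) = 0" by (auto intro: prod_zero)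
    then show ?thesis using that len by (simp add: tensor_def prod.distrib)
  qed
  have "(\<Sum>f | length f = d. tensor (map dual g) f * (-1) ^ pair_sgn K e f * (\<Prod>k<d. G (e ! k) (f ! k)))
      = (-1) ^ pair_sgn K e g * (\<Prod>k<d. \<Sum>y\<in>UNIV. dual (g ! k) y * G (e ! k) y)"
    by (simp add: summand sum_lists_length_prod[of "\<lambda>k y. dual (g ! k) y * G (e ! k) y"]
        flip: sum_distrib_left)
  also have "(\<Prod>k<d. \<Sum>y\<in>UNIV. dual (g ! k) y * G (e ! k) y) = tensor (map basis_vec e) g"
    using len by (simp only: dual flip: bil_basis_vec) (simp add: tensor_def basis_vec_def)
  finally show ?thesis by (simp add: tensor_map_basis_vec)
qed

lemma form_d_tensor_dual_right:
  fixes G :: "'b::finite \<Rightarrow> 'b \<Rightarrow> 'r::comm_ring_1"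
  assumes hom: "parity_homogeneous K dual"
    and dual: "\<And>b b'. bil G (basis_vec b') (dual b) = (if b = b' then 1 else 0)"
    and "length g = d"
  shows "form_d G K d X (tensor (map dual g)) = X g * (-1) ^ pair_sgn K g g"
proof -
  have "form_d G K d X (tensor (map dual g)) = (\<Sum>e | length e = d. X e *
      (\<Sum>f | length f = d. tensor (map dual g) f * (-1) ^ pair_sgn K e f * (\<Prod>k<d. G (e ! k) (f ! k))))"
    unfolding form_d_def by (simp add: sum_distrib_left mult.assoc)
  also have "\<dots> = (\<Sum>e | length e = d. X e * (if e = g then (-1) ^ pair_sgn K g g else 0))"
    by (intro sum.cong refl) (simp add: tensor_dual_pairing[OF hom dual _ assms(3)])
  also have "\<dots> = X g * (-1) ^ pair_sgn K g g"
    using assms(3) by (simp add: if_distrib sum.delta finite_list_length cong: if_cong)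
  finally show ?thesis .
qed

lemma form_d_sum_right:
  assumes "finite S"
  shows "form_d G K d X (\<lambda>f. \<Sum>g\<in>S. c g * Y g f) = (\<Sum>g\<in>S. c g * form_d G K d X (Y g))"
  unfolding form_d_def
  by (simp add: sum_distrib_left sum_distrib_right mult_ac sum.swap[of _ S])

lemma form_d_mult_const:
  "form_d G K d (\<lambda>e. a * X e) (\<lambda>f. b * Y f) = a * b * form_d G K d X Y"
  unfolding form_d_def by (simp add: sum_distrib_left mult_ac)

lemma form_d_x_gen_dual_right:
  fixes G :: "'b::finite \<Rightarrow> 'b \<Rightarrow> 'r::comm_ring_1"
  assumes hom: "parity_homogeneous K dual"
    and dual: "\<And>b b'. bil G (basis_vec b') (dual b) = (if b = b' then 1 else 0)"
    and "length bs = d"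
  shows "form_d G K d X (x_gen dual K' lt bs)
       = (\<Sum>e | orbit_eq bs e. (-1) ^ (odd_inv K' lt bs + odd_inv K' lt e) * X e * (-1) ^ pair_sgn K e e)"
proof -
  have "length e = d" if "orbit_eq bs e" for e
    using that assms(3) by (simp add: orbit_eq_def)
  then show ?thesis
    unfolding x_gen_def
    by (simp add: form_d_sum_right finite_orbit form_d_tensor_dual_right[OF hom dual] mult.assoc)
qed

definition odd_pairs :: "('b \<Rightarrow> kind) \<Rightarrow> ('b \<Rightarrow> 'b \<Rightarrow> bool) \<Rightarrow> 'b list \<Rightarrow> 'b set set" where
  "odd_pairs K P xs =
     {{x, y} | x y. x \<in> set xs \<and> y \<in> set xs \<and> x \<noteq> y \<and> K x = KO \<and> K y = KO \<and> P x y}"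

lemma card_odd_index_pairs:
  assumes dist: "odd_distinct K xs" and sym: "\<And>x y. P x y \<Longrightarrow> P y x"
  shows "card {(k, l). k < l \<and> l < length xs \<and> K (xs ! k) = KO \<and> K (xs ! l) = KO \<and> P (xs ! k) (xs ! l)}
       = card (odd_pairs K P xs)"
proof -
  let ?I = "{(k, l). k < l \<and> l < length xs \<and> K (xs ! k) = KO \<and> K (xs ! l) = KO \<and> P (xs ! k) (xs ! l)}"
  let ?pair = "\<lambda>(k, l). {xs ! k, xs ! l}"
  have index_eq: "xs ! i = xs ! j \<longleftrightarrow> i = j" if "i < length xs" "j < length xs" "K (xs ! i) = KO" for i j
    using dist that unfolding odd_distinct_def by metis
  have inj: "inj_on ?pair ?I"
  proof (rule inj_onI)
    fix a b assume "a \<in> ?I" "b \<in> ?I" "?pair a = ?pair b"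
    moreover obtain k l k' l' where ab: "a = (k, l)" "b = (k', l')" by (cases a, cases b)
    ultimately have kl: "(k, l) \<in> ?I" "(k', l') \<in> ?I" and "{xs ! k, xs ! l} = {xs ! k', xs ! l'}"
      by auto
    then consider "xs ! k = xs ! k'" "xs ! l = xs ! l'" | "xs ! k = xs ! l'" "xs ! l = xs ! k'"
      by (auto simp: doubleton_eq_iff)
    then show "a = b"
    proof cases
      case 1
      then show ?thesis using ab kl index_eq[of k k'] index_eq[of l l'] by auto
    next
      case 2
      then have "k = l'" "l = k'" using kl index_eq[of k l'] index_eq[of l k'] by auto
      then show ?thesis using kl by auto
    qed
  qed
  have image: "?pair ` ?I = odd_pairs K P xs"
  proof (intro subset_antisym subsetI)
    fix p assume "p \<in> ?pair ` ?I"
    then obtain k l where "p = {xs ! k, xs ! l}" "(k, l) \<in> ?I" by auto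
    moreover then have "xs ! k \<noteq> xs ! l" by (simp add: index_eq)
    ultimately show "p \<in> odd_pairs K P xs" unfolding odd_pairs_def by fastforce
  next
    fix p assume "p \<in> odd_pairs K P xs"
    then obtain x y where p: "p = {x, y}" "x \<in> set xs" "y \<in> set xs" "x \<noteq> y" "K x = KO" "K y = KO" "P x y"
      unfolding odd_pairs_def by blast
    then obtain i j where ij: "i < length xs" "xs ! i = x" "j < length xs" "xs ! j = y"
      by (auto simp: in_set_conv_nth)
    have "i \<noteq> j" using ij p(4) by auto
    show "p \<in> ?pair ` ?I"
    proof (cases "i < j")
      case True
      then have "(i, j) \<in> ?I" "p = ?pair (i, j)" using p ij by auto
      then show ?thesis by blast
    next
      case False
      then have "(j, i) \<in> ?I" "p = ?pair (j, i)"
        using p ij sym[of x y] \<open>i \<noteq> j\<close> by (auto simp: insert_commute)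
      then show ?thesis by blast
    qed
  qed
  show ?thesis using card_image[OF inj] by (simp only: image)
qed

lemma pair_sgn_self:
  assumes "odd_distinct K xs"
  shows "pair_sgn K xs xs = card (odd_pairs K (\<lambda>_ _. True) xs)"
proof -
  have "{(k, l). l < k \<and> k < length xs \<and> K (xs ! k) = KO \<and> K (xs ! l) = KO}
      = prod.swap ` {(k, l). k < l \<and> l < length xs \<and> K (xs ! k) = KO \<and> K (xs ! l) = KO}"
    by auto
  then have "pair_sgn K xs xs = card {(k, l). k < l \<and> l < length xs \<and> K (xs ! k) = KO \<and> K (xs ! l) = KO}"
    unfolding pair_sgn_def by (simp add: card_image)
  also have "\<dots> = card (odd_pairs K (\<lambda>_ _. True) xs)"
    using card_odd_index_pairs[OF assms, of "\<lambda>_ _. True"] by simp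
  finally show ?thesis .
qed

lemma odd_inv_parity:
  assumes dist: "odd_distinct K xs"
    and "asymp lt" "totalp lt" "asymp lt'" "totalp lt'"
  shows "(-1::'r::comm_ring_1) ^ (odd_inv K lt xs + odd_inv K lt' xs)
       = (-1) ^ card (odd_pairs K (\<lambda>x y. lt y x \<noteq> lt' y x) xs)"
proof -
  define A where "A = {(k, l). k < l \<and> l < length xs \<and> K (xs ! k) = KO \<and> K (xs ! l) = KO
    \<and> lt (xs ! l) (xs ! k)}"
  define A' where "A' = {(k, l). k < l \<and> l < length xs \<and> K (xs ! k) = KO \<and> K (xs ! l) = KO
    \<and> lt' (xs ! l) (xs ! k)}"
  define D where "D = {(k, l). k < l \<and> l < length xs \<and> K (xs ! k) = KO \<and> K (xs ! l) = KO
    \<and> lt (xs ! l) (xs ! k) \<noteq> lt' (xs ! l) (xs ! k)}"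
  have fin: "finite A" "finite A'" "finite D"
    unfolding A_def A'_def D_def by (auto intro: finite_subset[of _ "{..<length xs} \<times> {..<length xs}"])
  have "A \<union> A' = D \<union> (A \<inter> A')" "D \<inter> (A \<inter> A') = {}"
    unfolding A_def A'_def D_def by auto
  then have "card A + card A' = card D + 2 * card (A \<inter> A')"
    using card_Un_Int[OF fin(1,2)] fin by (simp add: card_Un_disjoint)
  moreover have "card D = card (odd_pairs K (\<lambda>x y. lt y x \<noteq> lt' y x) xs)"
    unfolding D_def
  proof (rule card_odd_index_pairs[OF dist, where P = "\<lambda>x y. lt y x \<noteq> lt' y x"])
    fix x y assume "lt y x \<noteq> lt' y x"
    moreover have "lt x y \<longleftrightarrow> \<not> lt y x" "lt' x y \<longleftrightarrow> \<not> lt' y x" if "x \<noteq> y"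
      using that assms(2-5) asympD totalpD by metis+
    ultimately show "lt x y \<noteq> lt' x y" by (cases "x = y") auto
  qed
  ultimately show ?thesis
    unfolding odd_inv_def A_def A'_def by (simp add: power_add power_mult)
qed

lemma swapk_eq_KO_iff [simp]: "swapk k = KO \<longleftrightarrow> k = KO"
  by (cases k) auto

lemma swapk_eq_KC_iff [simp]: "swapk k = KC \<longleftrightarrow> k = KA"
  by (cases k) auto

lemma odd_inv_swapk [simp]: "odd_inv (swapk \<circ> K) lt xs = odd_inv K lt xs"
  by (simp add: odd_inv_def)

lemma odd_inv_pair_sgn_parity_mset_eq:
  assumes dist: "odd_distinct K xs" and perm: "mset ys = mset xs"
    and lt: "asymp lt" "totalp lt" and lt': "asymp lt'" "totalp lt'"
  shows "(-1::'r::comm_ring_1) ^ (odd_inv K lt ys + odd_inv K lt' ys + pair_sgn K ys ys)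
       = (-1) ^ (odd_inv K lt xs + odd_inv K lt' xs + pair_sgn K xs xs)"
proof -
  have via_odd_pairs: "(-1::'r) ^ (odd_inv K lt zs + odd_inv K lt' zs + pair_sgn K zs zs)
      = (-1) ^ card (odd_pairs K (\<lambda>x y. lt y x \<noteq> lt' y x) zs)
        * (-1) ^ card (odd_pairs K (\<lambda>_ _. True) zs)"
    if "odd_distinct K zs" for zs
  proof -
    have "(-1::'r) ^ (odd_inv K lt zs + odd_inv K lt' zs)
        = (-1) ^ card (odd_pairs K (\<lambda>x y. lt y x \<noteq> lt' y x) zs)"
      using that lt lt' by (rule odd_inv_parity)
    then show ?thesis by (simp only: power_add pair_sgn_self[OF that])
  qed
  have "set ys = set xs" using perm by (metis set_mset_mset)
  then have "odd_pairs K P ys = odd_pairs K P xs" for P by (simp add: odd_pairs_def)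
  moreover have "odd_distinct K ys" using dist perm odd_distinct_mset_eq by blast
  ultimately show ?thesis using dist by (simp only: via_odd_pairs)
qed

lemma cfact_mset_eq:
  assumes "mset xs = mset ys"
  shows "cfact K xs = cfact K ys"
proof -
  have "set xs = set ys" using assms by (metis set_mset_mset)
  moreover have "count_list xs x = count_list ys x" for x using assms by (metis count_mset)
  ultimately show ?thesis by (simp add: cfact_def)
qed

lemma cfact_mult_cfact_swapk:
  assumes "odd_distinct K xs"
  shows "cfact K xs * cfact (swapk \<circ> K) xs = (\<Prod>x\<in>set xs. fact (count_list xs x))"
proof -
  let ?f = "\<lambda>k x. if K x = k then fact (count_list xs x) else 1"
  have "cfact K' xs = (\<Prod>x\<in>set xs. if K' x = KC then fact (count_list xs x) else 1)" for K'
    by (simp add: cfact_def prod.inter_filter)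
  then have "cfact K xs * cfact (swapk \<circ> K) xs = (\<Prod>x\<in>set xs. ?f KC x * ?f KA x)"
    by (simp add: prod.distrib)
  also have "\<dots> = (\<Prod>x\<in>set xs. fact (count_list xs x))"
  proof (rule prod.cong)
    fix x assume "x \<in> set xs"
    then show "?f KC x * ?f KA x = fact (count_list xs x)"
      using count_list_odd_distinct[OF assms] by (cases "K x") simp_all
  qed simp
  finally show ?thesis .
qed

lemma card_orbit_mult_prod_fact:
  "card {e. orbit_eq xs e} * (\<Prod>x\<in>set xs. fact (count_list xs x)) = fact (length xs)"
  using card_permutations_of_multiset_aux[of "mset xs"] by (simp add: orbit_eq_set count_mset)

lemma linear_order_strict_asymp_totalp:
  assumes "linear_order r"
  shows "asymp (\<lambda>x y. (x, y) \<in> r \<and> x \<noteq> y)" "totalp (\<lambda>x y. (x, y) \<in> r \<and> x \<noteq> y)"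
  using assms
  unfolding linear_order_on_def partial_order_on_def total_on_def antisym_def asymp_on_def totalp_on_def
  by auto

lemma form_d_y_gen_basis_dual_eq_sum:
  fixes G :: "'b::finite \<Rightarrow> 'b \<Rightarrow> 'r::comm_ring_1"
  assumes hom: "parity_homogeneous K dual"
    and dual: "\<And>b b'. bil G (basis_vec b') (dual b) = (if b = b' then 1 else 0)"
    and len: "length bs = d"
  shows "form_d G K d (y_gen basis_vec K lt bs') (y_gen dual (swapk \<circ> K) lt' bs)
       = of_nat (cfact K bs' * cfact (swapk \<circ> K) bs)
         * (\<Sum>e | orbit_eq bs e \<and> orbit_eq bs' e. (-1) ^ (odd_inv K lt bs' + odd_inv K lt' bs)
              * (-1) ^ (odd_inv K lt e + odd_inv K lt' e + pair_sgn K e e))"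
proof -
  have "(\<Sum>e | orbit_eq bs e. (-1) ^ (odd_inv K lt' bs + odd_inv K lt' e) * x_gen basis_vec K lt bs' e
        * (-1) ^ pair_sgn K e e)
      = (\<Sum>e | orbit_eq bs e \<and> orbit_eq bs' e. (-1) ^ (odd_inv K lt bs' + odd_inv K lt' bs)
          * (-1::'r) ^ (odd_inv K lt e + odd_inv K lt' e + pair_sgn K e e))"
    by (rule sum.mono_neutral_cong_right) (auto simp: finite_orbit x_gen_basis_vec power_add mult_ac)
  then show ?thesis
    unfolding y_gen_def form_d_mult_const by (simp add: form_d_x_gen_dual_right[OF hom dual len])
qed

lemma form_d_y_gen_basis_dual:
  fixes G :: "'b::finite \<Rightarrow> 'b \<Rightarrow> 'r::comm_ring_1"
  assumes hom: "parity_homogeneous K dual"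
    and dual: "\<And>b b'. bil G (basis_vec b') (dual b) = (if b = b' then 1 else 0)"
    and lt: "asymp lt" "totalp lt" and lt': "asymp lt'" "totalp lt'"
    and bs: "bs \<in> Seq UNIV K d" and bs': "bs' \<in> Seq UNIV K d"
  shows "form_d G K d (y_gen basis_vec K lt bs') (y_gen dual (swapk \<circ> K) lt' bs)
       = (-1) ^ (odd_inv K lt bs' + odd_inv K lt' bs)
         * (-1) ^ (odd_inv K lt bs + odd_inv K lt' bs + pair_sgn K bs bs)
         * of_nat (fact d) * (if orbit_eq bs bs' then 1 else 0)"
proof -
  have len: "length bs = d" and dist: "odd_distinct K bs"
    using bs by (simp_all add: Seq_iff)
  note expansion = form_d_y_gen_basis_dual_eq_sum[OF hom dual len]
  show ?thesis
  proof (cases "orbit_eq bs bs'")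
    case False
    then have no_common: "{e. orbit_eq bs e \<and> orbit_eq bs' e} = {}"
      by (auto simp: orbit_eq_iff_mset)
    show ?thesis using False unfolding expansion no_common by simp
  next
    case True
    then have perm: "mset bs' = mset bs" by (simp add: orbit_eq_iff_mset)
    then have common: "{e. orbit_eq bs e \<and> orbit_eq bs' e} = {e. orbit_eq bs e}"
      by (auto simp: orbit_eq_iff_mset)
    let ?s = "(-1::'r) ^ (odd_inv K lt bs' + odd_inv K lt' bs)
      * (-1) ^ (odd_inv K lt bs + odd_inv K lt' bs + pair_sgn K bs bs)"
    have "(\<Sum>e | orbit_eq bs e \<and> orbit_eq bs' e. (-1) ^ (odd_inv K lt bs' + odd_inv K lt' bs)
          * (-1::'r) ^ (odd_inv K lt e + odd_inv K lt' e + pair_sgn K e e))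
        = (\<Sum>e | orbit_eq bs e. ?s)"
      unfolding common
    proof (rule sum.cong[OF refl])
      fix e assume "e \<in> {e. orbit_eq bs e}"
      then have "mset e = mset bs" by (simp add: orbit_eq_iff_mset)
      then show "(-1) ^ (odd_inv K lt bs' + odd_inv K lt' bs)
          * (-1::'r) ^ (odd_inv K lt e + odd_inv K lt' e + pair_sgn K e e) = ?s"
        using odd_inv_pair_sgn_parity_mset_eq[where 'r = 'r, OF dist \<open>mset e = mset bs\<close> lt lt']
        by simp
    qed
    then have "form_d G K d (y_gen basis_vec K lt bs') (y_gen dual (swapk \<circ> K) lt' bs)
        = ?s * of_nat (card {e. orbit_eq bs e} * (cfact K bs * cfact (swapk \<circ> K) bs))"
      by (simp add: expansion cfact_mset_eq[OF perm] mult_ac)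
    also have "card {e. orbit_eq bs e} * (cfact K bs * cfact (swapk \<circ> K) bs) = fact d"
      using card_orbit_mult_prod_fact[of bs] len by (simp add: cfact_mult_cfact_swapk[OF dist])
    finally show ?thesis by (simp only: True if_True mult_1_right)
  qed
qed

theorem lemma3p9:
  fixes G :: "'b::finite \<Rightarrow> 'b \<Rightarrow> 'r::{idom, ring_char_0}"
    and kind :: "'b \<Rightarrow> kind"
    and ordB ordS :: "'b rel"
    and cp :: "'b \<Rightarrow> 'b"
    and dual :: "'b \<Rightarrow> ('b \<Rightarrow> 'r)"
    and \<epsilon> :: 'r
    and d :: nat
    and bs bs' :: "'b list"
  assumes pid: "pid_type TYPE('r)"
    and ordB: "linear_order ordB" and ordS: "linear_order ordS"
    and even: "\<And>x y. G x y \<noteq> 0 \<Longrightarrow> (kind x = KO \<longleftrightarrow> kind y = KO)"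
    and eps: "\<epsilon> = 1 \<or> \<epsilon> = -1"
    and supsym: "\<And>x y. G x y = \<epsilon> * (-1) ^ (if kind x = KO \<and> kind y = KO then 1 else 0) * G y x"
    and nondeg: "\<And>v. (\<forall>w. bil G v w = 0) \<Longrightarrow> v = (\<lambda>_. 0)"
    and aa: "\<And>x y. kind x = KA \<Longrightarrow> kind y = KA \<Longrightarrow> G x y = 0"
    and cp_bij: "bij_betw cp {b. kind b = KA} {b. kind b = KC}"
    and ac: "\<And>x y. kind x = KA \<Longrightarrow> kind y = KC \<Longrightarrow> G x y = (if y = cp x then 1 else 0)"
    and dual: "\<And>b b'. bil G (basis_vec b') (dual b) = (if b = b' then 1 else 0)"
    and b_seq: "bs \<in> Seq UNIV kind d" and b'_seq: "bs' \<in> Seq UNIV kind d"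
  shows "map dual bs \<in> Seq (range dual) (\<lambda>v. swapk (kind (inv dual v))) d
       \<and> (\<exists>s::'r. (s = 1 \<or> s = -1) \<and>
            form_d G kind d
              (y_gen basis_vec kind (\<lambda>x y. (x, y) \<in> ordB \<and> x \<noteq> y) bs')
              (y_gen dual (swapk \<circ> kind) (\<lambda>x y. (x, y) \<in> ordS \<and> x \<noteq> y) bs)
            = s * of_nat (fact d) * (if orbit_eq bs bs' then 1 else 0))"
proof -
  let ?ltB = "\<lambda>x y. (x, y) \<in> ordB \<and> x \<noteq> y" and ?ltS = "\<lambda>x y. (x, y) \<in> ordS \<and> x \<noteq> y"
  from even supsym nondeg dual have hom: "parity_homogeneous kind dual"
    by (rule dual_homogeneous)
  have "inj dual" by (rule inj_dual[OF dual])
  then have "map dual bs \<in> Seq (range dual) (\<lambda>v. swapk (kind (inv dual v))) d"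
    using b_seq by (rule map_in_Seq) (simp add: inv_f_f[OF \<open>inj dual\<close>])
  moreover have "form_d G kind d (y_gen basis_vec kind ?ltB bs') (y_gen dual (swapk \<circ> kind) ?ltS bs)
      = (-1) ^ (odd_inv kind ?ltB bs' + odd_inv kind ?ltS bs)
        * (-1) ^ (odd_inv kind ?ltB bs + odd_inv kind ?ltS bs + pair_sgn kind bs bs)
        * of_nat (fact d) * (if orbit_eq bs bs' then 1 else 0)"
    using hom dual linear_order_strict_asymp_totalp[OF ordB] linear_order_strict_asymp_totalp[OF ordS]
      b_seq b'_seq
    by (rule form_d_y_gen_basis_dual)
  moreover have "(-1::'r) ^ m * (-1) ^ n = 1 \<or> (-1::'r) ^ m * (-1) ^ n = -1" for m n
    by (simp add: minus_one_power_iff)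
  ultimately show ?thesis by blast
qed

end
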